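(* Assume the standing assumptions, Assumption (T), and that there is $q>2$ such that $V$ is continuously embedded in $L^q(\Omega)$. Let $t>1$ with $\frac1t+\frac2q<1$. Let $\bar u$ be a local solution of $\min_{u\in V}F(u)+\frac\alpha2\|u\|_V^2+\beta\int_\Omega|u|^pdx$ and assume $F'(\bar u)\in L^t(\Omega)$ (i.e. $F'(\bar u)v=\int_\Omega F'(\bar u)v\,dx$ for $v\in V$ with a function $F'(\bar u)\in L^t(\Omega)$). Then $\bar u\in L^\infty(\Omega)$.
   Context: Standing assumptions: $\Omega\subset\mathbb R^d$ bounded Lipschitz domain; $V$ real Hilbert space with inner product $\langle\cdot,\cdot\rangle_V$, $V\subset L^2(\Omega)$ with compact and dense embedding. $F:V\to\mathbb R$ weakly lower semicontinuous, bounded below by an affine function, continuously Fréchet differentiable. $\alpha>0$, $\beta>0$, $p\in(0,1)$. A local solution $\bar u$ is one for which there is $\rho>0$ such that the objective at $\bar u$ is not larger than at any $u$ with $\|u-\bar u\|_V\le\rho$. Assumption (T): (i) for every $u\in V$ the function $v:=\max(-1,\min(u,1))$ belongs to $V$ and satisfies $\langle u,v\rangle_V\ge\|v\|_V^2$; (ii) $C_0(\Omega)\cap V$ is dense in $V$ and in $C_0(\Omega)$ with respect to their norms. *)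

theory Defs
  imports "HOL-Analysis.Analysis"
begin

text \<open>Coordinate-free form: near every boundary point x0 there are a radius r > 0,
a unit vector e (the local vertical direction), a Lipschitz function g on the hyperplane
orthogonal to e, such that inside the ball the set is the strict subgraph of g.\<close>

definition lipschitz_domain :: "'d::euclidean_space set \<Rightarrow> bool" where
  "lipschitz_domain \<Omega> \<longleftrightarrow> open \<Omega> \<and> \<Omega> \<noteq> {} \<and>
     (\<forall>x0\<in>frontier \<Omega>. \<exists>r>0. \<exists>e::'d. \<exists>g::'d \<Rightarrow> real. \<exists>L.
        norm e = 1 \<and> L-lipschitz_on {y. y \<bullet> e = 0} g \<and>
        \<Omega> \<inter> ball x0 r = {x \<in> ball x0 r. x \<bullet> e < g (x - (x \<bullet> e) *\<^sub>R e)})"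

definition bounded_lipschitz_domain :: "'d::euclidean_space set \<Rightarrow> bool" where
  "bounded_lipschitz_domain \<Omega> \<longleftrightarrow> bounded \<Omega> \<and> lipschitz_domain \<Omega>"

definition Lp_mem :: "real \<Rightarrow> 'd::euclidean_space set \<Rightarrow> ('d \<Rightarrow> real) \<Rightarrow> bool" where
  "Lp_mem q \<Omega> f \<longleftrightarrow> f \<in> borel_measurable (lebesgue_on \<Omega>) \<and>
     integrable (lebesgue_on \<Omega>) (\<lambda>x. \<bar>f x\<bar> powr q)"

definition Lp_norm :: "real \<Rightarrow> 'd::euclidean_space set \<Rightarrow> ('d \<Rightarrow> real) \<Rightarrow> real" where
  "Lp_norm q \<Omega> f = (integral\<^sup>L (lebesgue_on \<Omega>) (\<lambda>x. \<bar>f x\<bar> powr q)) powr (1 / q)"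

definition Linf_mem :: "'d::euclidean_space set \<Rightarrow> ('d \<Rightarrow> real) \<Rightarrow> bool" where
  "Linf_mem \<Omega> f \<longleftrightarrow> f \<in> borel_measurable (lebesgue_on \<Omega>) \<and>
     (\<exists>M. AE x in lebesgue_on \<Omega>. \<bar>f x\<bar> \<le> M)"

text \<open>The Hilbert space V is an abstract real Hilbert space type 'v together with a linear map
\<iota> assigning to each element a representative function; equality in L^2 is equality a.e.\<close>

definition L2_embedding :: "'d::euclidean_space set \<Rightarrow> ('v::{real_inner,complete_space} \<Rightarrow> 'd \<Rightarrow> real) \<Rightarrow> bool" where
  "L2_embedding \<Omega> \<iota> \<longleftrightarrow>
     (\<forall>a v w. \<iota> (a *\<^sub>R v + w) = (\<lambda>x. a * \<iota> v x + \<iota> w x)) \<and>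
     (\<forall>v. Lp_mem 2 \<Omega> (\<iota> v)) \<and>
     (\<forall>v w. (AE x in lebesgue_on \<Omega>. \<iota> v x = \<iota> w x) \<longrightarrow> v = w) \<and>
     (\<exists>C. \<forall>v. Lp_norm 2 \<Omega> (\<iota> v) \<le> C * norm v)"

definition compact_dense_L2_embedding :: "'d::euclidean_space set \<Rightarrow> ('v::{real_inner,complete_space} \<Rightarrow> 'd \<Rightarrow> real) \<Rightarrow> bool" where
  "compact_dense_L2_embedding \<Omega> \<iota> \<longleftrightarrow> L2_embedding \<Omega> \<iota> \<and>
     (\<forall>s::nat \<Rightarrow> 'v. bounded (range s) \<longrightarrow>
        (\<exists>r g. strict_mono r \<and> Lp_mem 2 \<Omega> g \<and>
               (\<lambda>n. Lp_norm 2 \<Omega> (\<lambda>x. \<iota> (s (r n)) x - g x)) \<longlonglongrightarrow> 0)) \<and>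
     (\<forall>f. Lp_mem 2 \<Omega> f \<longrightarrow> (\<forall>\<epsilon>>0. \<exists>v. Lp_norm 2 \<Omega> (\<lambda>x. \<iota> v x - f x) < \<epsilon>))"

definition continuous_Lq_embedding :: "real \<Rightarrow> 'd::euclidean_space set \<Rightarrow> ('v::real_normed_vector \<Rightarrow> 'd \<Rightarrow> real) \<Rightarrow> bool" where
  "continuous_Lq_embedding q \<Omega> \<iota> \<longleftrightarrow>
     (\<forall>v. Lp_mem q \<Omega> (\<iota> v)) \<and> (\<exists>C. \<forall>v. Lp_norm q \<Omega> (\<iota> v) \<le> C * norm v)"

definition clamp1 :: "real \<Rightarrow> real" where
  "clamp1 s = max (-1) (min s 1)"

definition C0_fun :: "'d::euclidean_space set \<Rightarrow> ('d \<Rightarrow> real) \<Rightarrow> bool" where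
  "C0_fun \<Omega> f \<longleftrightarrow> continuous_on (closure \<Omega>) f \<and> (\<forall>x\<in>frontier \<Omega>. f x = 0)"

definition in_C0_cap_V :: "'d::euclidean_space set \<Rightarrow> ('v \<Rightarrow> 'd \<Rightarrow> real) \<Rightarrow> 'v \<Rightarrow> bool" where
  "in_C0_cap_V \<Omega> \<iota> v \<longleftrightarrow> (\<exists>f. C0_fun \<Omega> f \<and> (AE x in lebesgue_on \<Omega>. \<iota> v x = f x))"

definition assumption_T :: "'d::euclidean_space set \<Rightarrow> ('v::{real_inner,complete_space} \<Rightarrow> 'd \<Rightarrow> real) \<Rightarrow> bool" where
  "assumption_T \<Omega> \<iota> \<longleftrightarrow>
     (\<forall>u. \<exists>v. (AE x in lebesgue_on \<Omega>. \<iota> v x = clamp1 (\<iota> u x)) \<and> inner u v \<ge> (norm v)\<^sup>2) \<and>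
     (\<forall>v. \<forall>\<epsilon>>0. \<exists>w. in_C0_cap_V \<Omega> \<iota> w \<and> norm (w - v) < \<epsilon>) \<and>
     (\<forall>f. C0_fun \<Omega> f \<longrightarrow> (\<forall>\<epsilon>>0. \<exists>w g. C0_fun \<Omega> g \<and> (AE x in lebesgue_on \<Omega>. \<iota> w x = g x) \<and>
          (\<forall>x\<in>closure \<Omega>. \<bar>g x - f x\<bar> < \<epsilon>)))"

definition weakly_converges :: "(nat \<Rightarrow> 'v::real_inner) \<Rightarrow> 'v \<Rightarrow> bool" where
  "weakly_converges s v \<longleftrightarrow> (\<forall>w. (\<lambda>n. inner (s n) w) \<longlonglongrightarrow> inner v w)"

definition weakly_lsc :: "('v::real_inner \<Rightarrow> real) \<Rightarrow> bool" where
  "weakly_lsc F \<longleftrightarrow> (\<forall>s v. weakly_converges s v \<longrightarrow>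
     ereal (F v) \<le> liminf (\<lambda>n. ereal (F (s n))))"

definition bounded_below_affine :: "('v::real_inner \<Rightarrow> real) \<Rightarrow> bool" where
  "bounded_below_affine F \<longleftrightarrow> (\<exists>g c. \<forall>v. F v \<ge> inner g v + c)"

definition continuously_frechet :: "('v::real_normed_vector \<Rightarrow> real) \<Rightarrow> ('v \<Rightarrow> 'v \<Rightarrow>\<^sub>L real) \<Rightarrow> bool" where
  "continuously_frechet F DF \<longleftrightarrow> (\<forall>v. (F has_derivative blinfun_apply (DF v)) (at v)) \<and>
     continuous_on UNIV DF"

definition objective :: "('v::real_normed_vector \<Rightarrow> real) \<Rightarrow> real \<Rightarrow> real \<Rightarrow> real \<Rightarrow>
     'd::euclidean_space set \<Rightarrow> ('v \<Rightarrow> 'd \<Rightarrow> real) \<Rightarrow> 'v \<Rightarrow> real" where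
  "objective F \<alpha> \<beta> p \<Omega> \<iota> u =
     F u + \<alpha> / 2 * (norm u)\<^sup>2 + \<beta> * integral\<^sup>L (lebesgue_on \<Omega>) (\<lambda>x. \<bar>\<iota> u x\<bar> powr p)"

definition local_solution :: "('v::real_normed_vector \<Rightarrow> real) \<Rightarrow> 'v \<Rightarrow> bool" where
  "local_solution J ub \<longleftrightarrow> (\<exists>\<rho>>0. \<forall>u. norm (u - ub) \<le> \<rho> \<longrightarrow> J ub \<le> J u)"

end

theory Submission
  imports Defs
begin

text \<open>Stampacchia's truncation method. For \<open>k > 0\<close> let \<open>w\<^sub>k\<close> be the excess of the local
  solution \<open>u\<close> over level \<open>k\<close>, i.e. \<open>u\<close> minus its truncation at \<open>\<plusminus>k\<close>. Assumption (T),
  rescaled, puts \<open>w\<^sub>k\<close> in \<open>V\<close> with \<open>\<parallel>w\<^sub>k\<parallel>\<^sup>2 \<le> \<langle>u, w\<^sub>k\<rangle>\<close>, and \<open>u - s w\<^sub>k\<close> is pointwise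
  smaller than \<open>u\<close> in modulus for \<open>0 \<le> s \<le> 1\<close>, so the nonsmooth term does not increase in
  that direction and local optimality gives \<open>\<alpha> \<parallel>w\<^sub>k\<parallel>\<^sup>2 \<le> -F'(u) w\<^sub>k = -\<integral> g w\<^sub>k\<close>.
  H\<ouml>lder's inequality on the level set \<open>A\<^sub>k = {|u| > k}\<close> with exponents \<open>t\<close>, \<open>q\<close>,
  \<open>1/r\<close> (where \<open>r = 1 - 1/t - 1/q\<close>) and the embedding \<open>V \<subseteq> L\<^sup>q\<close> yield
  \<open>\<parallel>w\<^sub>k\<parallel>\<^sub>q \<le> K |A\<^sub>k|\<^sup>r\<close>. As \<open>(h - k) |A\<^sub>h|\<^sup>1\<^sup>/\<^sup>q \<le> \<parallel>w\<^sub>k\<parallel>\<^sub>q\<close> for \<open>h > k\<close>, the measure of the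
  level sets satisfies \<open>(h - k)\<^sup>q |A\<^sub>h| \<le> K\<^sup>q |A\<^sub>k|\<^sup>r\<^sup>q\<close> with \<open>r q > 1\<close>, and Stampacchia's
  lemma gives \<open>|A\<^sub>k| = 0\<close> for some \<open>k\<close>.\<close>

section \<open>Young and H\<ouml>lder inequalities with three factors\<close>

lemma Youngs_inequality_three:
  fixes a b c t q r :: real
  assumes a: "a \<ge> 0" and b: "b \<ge> 0" and c: "c \<ge> 0"
    and t: "t > 1" and q: "q > 1" and r: "r > 0" and sum: "1/t + 1/q + r = 1"
  shows "a * b * c \<le> a powr t / t + b powr q / q + r * c powr (1/r)"
proof -
  txt \<open>Young with exponents \<open>t\<close> and \<open>m = 1/(1/q + r)\<close>, then again on \<open>(b c)\<^sup>m\<close> with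
    exponents \<open>q/m\<close> and \<open>1/(r m)\<close>.\<close>
  define m where "m = 1 / (1/q + r)"
  have s0: "1/q + r > 0" using q r by (smt (verit) divide_pos_pos)
  have s1: "1/q + r < 1" using sum t by (smt (verit) divide_pos_pos)
  have m1: "m > 1" unfolding m_def using s0 s1 by (simp add: field_simps)
  have tm: "1/t + 1/m = 1" unfolding m_def using sum by simp
  have Y1: "a * (b*c) \<le> a powr t / t + (b*c) powr m / m"
    by (rule Youngs_inequality) (use t m1 tm a b c in auto)
  have qm: "q/m > 1" unfolding m_def using q r by (simp add: field_simps)
  have rm: "1/(r*m) > 1" unfolding m_def using q r s1 by (simp add: field_simps)
  have qq: "q + q*(q*r) > 0" using q r by (simp add: add_pos_pos)
  have qm2: "1/(q/m) + 1/(1/(r*m)) = 1" unfolding m_def using q r s0 qq by (simp add: field_simps)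
  have Y2: "(b powr m) * (c powr m) \<le> (b powr m) powr (q/m) / (q/m) + (c powr m) powr (1/(r*m)) / (1/(r*m))"
    by (rule Youngs_inequality) (use qm rm qm2 in auto)
  have e1: "(b powr m) powr (q/m) = b powr q" using m1 by (simp add: powr_powr)
  have e2: "(c powr m) powr (1/(r*m)) = c powr (1/r)" using m1 r by (simp add: powr_powr)
  have "(b*c) powr m = b powr m * c powr m" using b c by (simp add: powr_mult)
  also have "\<dots> \<le> m * (b powr q / q + r * c powr (1/r))"
    using Y2 e1 e2 m1 by (simp add: field_simps)
  finally have "(b*c) powr m / m \<le> b powr q / q + r * c powr (1/r)"
    using m1 by (simp add: field_simps)
  with Y1 show ?thesis by (simp add: mult.assoc)
qed

lemma Youngs_inequality_three_scaled:
  fixes a b G W m t q r :: real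
  assumes a: "a \<ge> 0" and b: "b \<ge> 0" and G: "G > 0" and W: "W > 0" and m: "m > 0"
    and t: "t > 1" and q: "q > 1" and r: "r > 0" and sum: "1/t + 1/q + r = 1"
  shows "a * b \<le> G powr (1/t) * W powr (1/q) * m powr r * (a powr t / (G * t) + b powr q / (W * q) + r / m)"
proof -
  define Z where "Z = G powr (1/t) * W powr (1/q) * m powr r"
  define a' where "a' = a / G powr (1/t)"
  define b' where "b' = b / W powr (1/q)"
  define c' where "c' = 1 / m powr r"
  have "a * b = Z * (a' * b' * c')"
    unfolding Z_def a'_def b'_def c'_def using G W m by (simp add: field_simps)
  also have "\<dots> \<le> Z * (a' powr t / t + b' powr q / q + r * c' powr (1/r))"
    unfolding Z_def
    by (intro mult_left_mono Youngs_inequality_three) (use a b t q r sum G W m in \<open>auto simp: a'_def b'_def c'_def\<close>)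
  also have "\<dots> = Z * (a powr t / (G * t) + b powr q / (W * q) + r / m)"
    unfolding a'_def b'_def c'_def using G W m t q r by (simp add: powr_divide powr_powr)
  finally show ?thesis unfolding Z_def .
qed

lemma AE_abs_mult_eq_0_on_support:
  fixes M :: "'a measure" and g f :: "'a \<Rightarrow> real" and A :: "'a set" and t q :: real
  assumes A: "A \<in> sets M" and A_finite: "emeasure M A < \<infinity>"
    and g_int: "integrable M (\<lambda>x. \<bar>g x\<bar> powr t)" and f_int: "integrable M (\<lambda>x. \<bar>f x\<bar> powr q)"
    and f_support: "\<And>x. x \<in> space M \<Longrightarrow> x \<notin> A \<Longrightarrow> f x = 0"
    and degenerate: "(\<integral>x. \<bar>g x\<bar> powr t \<partial>M) = 0 \<or> (\<integral>x. \<bar>f x\<bar> powr q \<partial>M) = 0 \<or> measure M A = 0"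
  shows "AE x in M. \<bar>g x\<bar> * \<bar>f x\<bar> = 0"
proof -
  consider "(\<integral>x. \<bar>g x\<bar> powr t \<partial>M) = 0" | "(\<integral>x. \<bar>f x\<bar> powr q \<partial>M) = 0" | "measure M A = 0"
    using degenerate by blast
  then show ?thesis
  proof cases
    case 1
    then have "AE x in M. \<bar>g x\<bar> powr t = 0"
      using integral_nonneg_eq_0_iff_AE[OF g_int] by simp
    then show ?thesis by eventually_elim simp
  next
    case 2
    then have "AE x in M. \<bar>f x\<bar> powr q = 0"
      using integral_nonneg_eq_0_iff_AE[OF f_int] by simp
    then show ?thesis by eventually_elim simp
  next
    case 3
    then have "emeasure M A = 0" using A_finite by (simp add: emeasure_eq_ennreal_measure)
    then have "AE x in M. x \<notin> A" using A by (intro AE_not_in) auto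
    then show ?thesis using AE_space by eventually_elim (simp add: f_support)
  qed
qed

lemma Holder_inequality_on_support:
  fixes M :: "'a measure" and g f :: "'a \<Rightarrow> real" and A :: "'a set" and t q r :: real
  assumes g[measurable]: "g \<in> borel_measurable M" and f[measurable]: "f \<in> borel_measurable M"
    and A[measurable]: "A \<in> sets M" and A_finite: "emeasure M A < \<infinity>"
    and g_int: "integrable M (\<lambda>x. \<bar>g x\<bar> powr t)" and f_int: "integrable M (\<lambda>x. \<bar>f x\<bar> powr q)"
    and f_support: "\<And>x. x \<in> space M \<Longrightarrow> x \<notin> A \<Longrightarrow> f x = 0"
    and t: "t > 1" and q: "q > 1" and r: "r > 0" and sum: "1/t + 1/q + r = 1"
  shows "(\<integral>x. \<bar>g x\<bar> * \<bar>f x\<bar> \<partial>M) \<le>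
    (\<integral>x. \<bar>g x\<bar> powr t \<partial>M) powr (1/t) * (\<integral>x. \<bar>f x\<bar> powr q \<partial>M) powr (1/q) * measure M A powr r"
proof -
  define G where "G = (\<integral>x. \<bar>g x\<bar> powr t \<partial>M)"
  define W where "W = (\<integral>x. \<bar>f x\<bar> powr q \<partial>M)"
  define m where "m = measure M A"
  define Z where "Z = G powr (1/t) * W powr (1/q) * m powr r"
  show ?thesis
  proof (cases "G = 0 \<or> W = 0 \<or> m = 0")
    case True
    then have "AE x in M. \<bar>g x\<bar> * \<bar>f x\<bar> = 0"
      unfolding G_def W_def m_def by (intro AE_abs_mult_eq_0_on_support[OF A A_finite g_int f_int f_support])
    then have "(\<integral>x. \<bar>g x\<bar> * \<bar>f x\<bar> \<partial>M) = 0"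
      by (rule integral_eq_zero_AE)
    then show ?thesis by simp
  next
    case False
    then have G: "G > 0" and W: "W > 0" and m: "m > 0"
      unfolding G_def W_def m_def by (auto simp: less_le)
    define R where "R x = Z * (\<bar>g x\<bar> powr t / (G * t) + \<bar>f x\<bar> powr q / (W * q) + r * indicator A x / m)" for x
    have R_nonneg: "R x \<ge> 0" for x
      unfolding R_def Z_def using G W m t q r by (intro mult_nonneg_nonneg add_nonneg_nonneg) auto
    have pointwise: "\<bar>g x\<bar> * \<bar>f x\<bar> \<le> R x" if x: "x \<in> space M" for x
    proof (cases "x \<in> A")
      case False
      then show ?thesis using f_support[OF x] R_nonneg[of x] by simp
    next
      case True
      then show ?thesis
        using Youngs_inequality_three_scaled[of "\<bar>g x\<bar>" "\<bar>f x\<bar>" G W m t q r] G W m t q r sum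
        unfolding R_def Z_def by simp
    qed
    have indicator_int: "integrable M (\<lambda>x. r * indicator A x / m)"
      using A A_finite by (intro integrable_divide integrable_mult_right integrable_real_indicator) auto
    have "(\<integral>x. \<bar>g x\<bar> * \<bar>f x\<bar> \<partial>M) \<le> (\<integral>x. R x \<partial>M)"
      using pointwise R_nonneg g_int f_int indicator_int unfolding R_def
      by (intro integral_mono') (auto intro!: integrable_mult_right integrable_add integrable_divide)
    also have "\<dots> = Z * ((\<integral>x. \<bar>g x\<bar> powr t / (G * t) \<partial>M) + (\<integral>x. \<bar>f x\<bar> powr q / (W * q) \<partial>M)
        + (\<integral>x. r * indicator A x / m \<partial>M))"
      unfolding R_def using g_int f_int indicator_int by (simp add: integral_add)
    also have "\<dots> = Z * (1/t + 1/q + r)"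
      using G W m A by (simp add: G_def[symmetric] W_def[symmetric] m_def[symmetric] sets.Int_space_eq2)
    also have "\<dots> = Z"
      using sum by simp
    finally show ?thesis unfolding Z_def G_def W_def m_def .
  qed
qed

section \<open>Stampacchia's lemma\<close>

lemma Stampacchia_lemma_step:
  fixes a b d K P \<kappa> \<theta> q :: real and n :: nat
  assumes rec: "(d * (1/2) ^ Suc n) powr q * b \<le> K * a powr \<theta>" and K: "K \<ge> 0"
    and a: "0 \<le> a" "a \<le> P * \<kappa> ^ n" and P: "P > 0" and \<theta>: "\<theta> \<ge> 0" and d: "d > 0"
    and \<kappa>: "\<kappa> > 0" "\<kappa> powr (\<theta> - 1) = (1/2) powr q"
    and large: "K * P powr (\<theta> - 1) \<le> d powr q * (1/2) powr q * \<kappa>"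
  shows "b \<le> P * \<kappa> ^ Suc n"
proof -
  define \<rho> where "\<rho> = (1/2::real) powr q"
  have \<rho>: "\<rho> > 0" unfolding \<rho>_def by simp
  have "(1/2::real) ^ Suc n = (1/2) powr real (Suc n)"
    by (rule powr_realpow[symmetric]) simp
  then have "(d * (1/2) ^ Suc n) powr q = d powr q * ((1/2) powr real (Suc n)) powr q"
    by (simp only: powr_mult)
  also have "\<dots> = d powr q * \<rho> ^ Suc n"
    unfolding \<rho>_def by (simp add: powr_powr powr_power mult.commute del: power_Suc of_nat_Suc)
  finally have \<delta>: "(d * (1/2) ^ Suc n) powr q = d powr q * \<rho> ^ Suc n" .
  have P_powr: "P powr \<theta> = P * P powr (\<theta> - 1)"
    using P powr_add[of P 1 "\<theta> - 1"] by simp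
  have "(\<kappa> ^ n) powr \<theta> = \<kappa> powr (real n + real n * (\<theta> - 1))"
    using \<kappa> by (simp add: powr_realpow[symmetric] powr_powr algebra_simps)
  also have "\<dots> = \<kappa> ^ n * \<rho> ^ n"
    using \<kappa> unfolding \<rho>_def by (simp add: powr_add powr_realpow powr_power[symmetric])
  finally have \<kappa>_powr: "(\<kappa> ^ n) powr \<theta> = \<kappa> ^ n * \<rho> ^ n" .
  have "(d * (1/2) ^ Suc n) powr q * b \<le> K * (P * \<kappa> ^ n) powr \<theta>"
    using rec a K \<theta> by (meson mult_left_mono order.trans powr_mono2)
  also have "\<dots> = K * P powr (\<theta> - 1) * (P * \<kappa> ^ n * \<rho> ^ n)"
    by (simp add: powr_mult P_powr \<kappa>_powr)
  also have "\<dots> \<le> d powr q * \<rho> * \<kappa> * (P * \<kappa> ^ n * \<rho> ^ n)"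
    using large P \<kappa> \<rho> unfolding \<rho>_def by (intro mult_right_mono) auto
  also have "\<dots> = (d * (1/2) ^ Suc n) powr q * (P * \<kappa> ^ Suc n)"
    unfolding \<delta> by (simp add: algebra_simps)
  finally show ?thesis
    using d \<rho> \<delta> by (simp add: mult_le_cancel_left_pos)
qed

lemma Stampacchia_lemma:
  fixes \<phi> :: "real \<Rightarrow> real" and K q \<theta> :: real
  assumes nonneg: "\<And>k. \<phi> k \<ge> 0" and antimono: "\<And>k h. 0 < k \<Longrightarrow> k \<le> h \<Longrightarrow> \<phi> h \<le> \<phi> k"
    and rec: "\<And>k h. 0 < k \<Longrightarrow> k < h \<Longrightarrow> (h - k) powr q * \<phi> h \<le> K * \<phi> k powr \<theta>"
    and q: "q > 0" and \<theta>: "\<theta> > 1"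
  shows "\<exists>k>0. \<phi> k = 0"
proof (cases "\<phi> 1 = 0")
  case True
  then show ?thesis by (intro exI[of _ 1]) auto
next
  case False
  define P where "P = \<phi> 1"
  define K' where "K' = max K 0"
  define \<rho> where "\<rho> = (1/2::real) powr q"
  define \<kappa> where "\<kappa> = \<rho> powr (1 / (\<theta> - 1))"
  define d where "d = (K' * P powr (\<theta> - 1) / (\<rho> * \<kappa>) + 1) powr (1 / q)"
  define level where "level n = 1 + d * (1 - (1/2) ^ n)" for n
  have P: "P > 0" using False nonneg[of 1] unfolding P_def by simp
  have \<rho>: "0 < \<rho>" "\<rho> < 1" unfolding \<rho>_def using q powr_less_mono2[of q "1/2" 1] by auto
  have \<kappa>: "0 < \<kappa>" "\<kappa> < 1" "\<kappa> powr (\<theta> - 1) = \<rho>"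
    unfolding \<kappa>_def using \<rho> \<theta> powr_less_mono2[of "1 / (\<theta> - 1)" \<rho> 1] by (auto simp: powr_powr)
  have K': "K' * P powr (\<theta> - 1) / (\<rho> * \<kappa>) \<ge> 0"
    unfolding K'_def using \<rho>(1) \<kappa>(1) by simp
  then have d: "d > 0" "d powr q = K' * P powr (\<theta> - 1) / (\<rho> * \<kappa>) + 1"
    unfolding d_def using q by (auto simp: powr_powr)
  then have large: "K' * P powr (\<theta> - 1) \<le> d powr q * \<rho> * \<kappa>"
    using \<rho>(1) \<kappa>(1) by (simp add: field_simps)
  have level_ge: "level n \<ge> 1" for n unfolding level_def using d by (simp add: power_le_one)
  have rec': "(h - k) powr q * \<phi> h \<le> K' * \<phi> k powr \<theta>" if "0 < k" "k < h" for k h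
    using rec[OF that] unfolding K'_def by (smt (verit) mult_right_mono powr_ge_zero)
  txt \<open>The levels increase to \<open>1 + d\<close>, and \<open>d\<close> is large enough for the recursion to force
    geometric decay of \<open>\<phi>\<close> along them.\<close>
  have decay: "\<phi> (level n) \<le> P * \<kappa> ^ n" for n
  proof (induction n)
    case 0
    then show ?case unfolding level_def P_def by simp
  next
    case (Suc n)
    have gap: "level (Suc n) - level n = d * (1/2) ^ Suc n"
      unfolding level_def by (simp add: field_simps)
    moreover have "d * (1/2) ^ Suc n > 0" using d by simp
    ultimately have "(level (Suc n) - level n) powr q * \<phi> (level (Suc n)) \<le> K' * \<phi> (level n) powr \<theta>"
      using level_ge[of n] by (intro rec') auto
    then have "(d * (1/2) ^ Suc n) powr q * \<phi> (level (Suc n)) \<le> K' * \<phi> (level n) powr \<theta>"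
      unfolding gap .
    then show ?case
      using \<theta> P \<kappa> d(1) large nonneg Suc.IH unfolding \<rho>_def
      by (intro Stampacchia_lemma_step[where K = K' and d = d]) (auto simp: K'_def)
  qed
  have "\<phi> (1 + d) \<le> P * \<kappa> ^ n" for n
    using antimono[of "level n" "1 + d"] level_ge[of n] decay[of n] d
    unfolding level_def by simp
  moreover have "(\<lambda>n. P * \<kappa> ^ n) \<longlonglongrightarrow> P * 0"
    using \<kappa> by (intro tendsto_mult tendsto_const LIMSEQ_power_zero) auto
  ultimately have "\<phi> (1 + d) \<le> 0"
    by (intro LIMSEQ_le_const[of "\<lambda>n. P * \<kappa> ^ n"]) auto
  then show ?thesis using nonneg[of "1 + d"] d by (intro exI[of _ "1 + d"]) auto
qed

section \<open>Excess over a level\<close>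

definition excess :: "real \<Rightarrow> real \<Rightarrow> real" where
  "excess k y = y - k * clamp1 (y / k)"

lemma abs_excess: "k > 0 \<Longrightarrow> \<bar>excess k y\<bar> = max (\<bar>y\<bar> - k) 0"
  unfolding excess_def clamp1_def by (auto simp: field_simps max_def min_def)

lemma excess_eq_0: "k > 0 \<Longrightarrow> \<bar>y\<bar> \<le> k \<Longrightarrow> excess k y = 0"
  unfolding excess_def clamp1_def by (auto simp: field_simps max_def min_def)

lemma abs_diff_scaled_excess_le:
  assumes "k > 0" "0 \<le> s" "s \<le> 1"
  shows "\<bar>y - s * excess k y\<bar> \<le> \<bar>y\<bar>"
proof -
  consider "\<bar>y\<bar> \<le> k" | "y > k" | "y < -k" by linarith
  then show ?thesis
  proof cases
    case 1
    then show ?thesis using excess_eq_0[OF assms(1)] by simp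
  next
    case 2
    then have "y - s * excess k y = y - s * (y - k)"
      using assms unfolding excess_def clamp1_def by (auto simp: field_simps)
    moreover have "0 \<le> s * (y - k)" "s * (y - k) \<le> y - k"
      using 2 assms by (simp_all add: mult_left_le_one_le)
    ultimately show ?thesis using 2 assms by arith
  next
    case 3
    then have "y - s * excess k y = y - s * (y + k)"
      using assms unfolding excess_def clamp1_def by (auto simp: field_simps)
    moreover have "s * (y + k) \<le> 0" "y + k \<le> s * (y + k)"
      using 3 assms mult_left_le_one_le[of "-(y + k)" s] by (simp_all add: mult_nonneg_nonpos)
    ultimately show ?thesis using 3 assms by arith
  qed
qed

lemma borel_measurable_excess[measurable]:
  assumes [measurable]: "u \<in> borel_measurable M"
  shows "(\<lambda>x. excess k (u x)) \<in> borel_measurable M"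
  unfolding excess_def clamp1_def by measurable

lemma excess_powr_Chebyshev:
  fixes M :: "'a measure" and u :: "'a \<Rightarrow> real" and q k h :: real
  assumes fin: "finite_measure M" and u[measurable]: "u \<in> borel_measurable M"
    and q: "q \<ge> 0" and k: "0 < k" "k < h"
    and integrable: "integrable M (\<lambda>x. \<bar>excess k (u x)\<bar> powr q)"
  shows "(h - k) powr q * measure M {x \<in> space M. h < \<bar>u x\<bar>} \<le> (\<integral>x. \<bar>excess k (u x)\<bar> powr q \<partial>M)"
proof -
  define A where "A = {x \<in> space M. h < \<bar>u x\<bar>}"
  have A[measurable]: "A \<in> sets M" unfolding A_def by measurable
  have "(h - k) powr q * measure M A = (\<integral>x. (h - k) powr q * indicator A x \<partial>M)"
    by (simp add: sets.Int_space_eq2)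
  also have "\<dots> \<le> (\<integral>x. \<bar>excess k (u x)\<bar> powr q \<partial>M)"
  proof (rule integral_mono[OF _ integrable])
    show "integrable M (\<lambda>x. (h - k) powr q * indicator A x)"
      using finite_measure.emeasure_finite[OF fin, of A]
      by (intro integrable_mult_right integrable_real_indicator) (auto simp: less_top)
    show "(h - k) powr q * indicator A x \<le> \<bar>excess k (u x)\<bar> powr q" for x
    proof (cases "x \<in> A")
      case True
      then have "h - k \<le> \<bar>excess k (u x)\<bar>" unfolding A_def using abs_excess[OF k(1)] by auto
      then show ?thesis using True k q by (simp add: powr_mono2)
    qed simp
  qed
  finally show ?thesis unfolding A_def .
qed

lemma AE_abs_bounded_of_excess_estimate:
  fixes M :: "'a measure" and u :: "'a \<Rightarrow> real" and K q r :: real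
  assumes fin: "finite_measure M" and u[measurable]: "u \<in> borel_measurable M"
    and q: "q > 0" and K: "K \<ge> 0" and rq: "r * q > 1"
    and integrable: "\<And>k. k > 0 \<Longrightarrow> integrable M (\<lambda>x. \<bar>excess k (u x)\<bar> powr q)"
    and estimate: "\<And>k. k > 0 \<Longrightarrow>
      (\<integral>x. \<bar>excess k (u x)\<bar> powr q \<partial>M) powr (1/q) \<le> K * measure M {x \<in> space M. k < \<bar>u x\<bar>} powr r"
  shows "\<exists>c. AE x in M. \<bar>u x\<bar> \<le> c"
proof -
  define A where "A k = {x \<in> space M. k < \<bar>u x\<bar>}" for k
  define \<phi> where "\<phi> k = measure M (A k)" for k
  have A[measurable]: "A k \<in> sets M" for k unfolding A_def by measurable
  have rec: "(h - k) powr q * \<phi> h \<le> K powr q * \<phi> k powr (r * q)" if hk: "0 < k" "k < h" for k h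
  proof -
    have "(h - k) powr q * \<phi> h \<le> ((\<integral>x. \<bar>excess k (u x)\<bar> powr q \<partial>M) powr (1/q)) powr q"
      using excess_powr_Chebyshev[OF fin u _ hk integrable[OF hk(1)]] q
      unfolding \<phi>_def A_def by (simp add: powr_powr)
    also have "\<dots> \<le> (K * \<phi> k powr r) powr q"
      using estimate[OF hk(1)] q unfolding \<phi>_def A_def by (intro powr_mono2) auto
    also have "\<dots> = K powr q * \<phi> k powr (r * q)"
      by (simp add: powr_mult powr_powr)
    finally show ?thesis .
  qed
  have "\<exists>k>0. \<phi> k = 0"
  proof (rule Stampacchia_lemma[OF _ _ rec q rq])
    show "\<phi> h \<le> \<phi> k" if "0 < k" "k \<le> h" for k h
      unfolding \<phi>_def using that by (intro finite_measure.finite_measure_mono[OF fin]) (auto simp: A_def)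
  qed (simp add: \<phi>_def)
  then obtain k where "\<phi> k = 0" by blast
  then have "emeasure M (A k) = 0"
    using finite_measure.emeasure_finite[OF fin, of "A k"]
    unfolding \<phi>_def by (simp add: emeasure_eq_ennreal_measure less_top)
  then have "AE x in M. x \<notin> A k" using A by (intro AE_not_in) auto
  then have "AE x in M. \<bar>u x\<bar> \<le> k" using AE_space by eventually_elim (auto simp: A_def)
  then show ?thesis by blast
qed

section \<open>The first-order condition along truncation directions\<close>

lemma L2_embedding_zero:
  assumes "L2_embedding \<Omega> \<iota>" shows "\<iota> 0 x = 0"
proof -
  have "\<iota> (1 *\<^sub>R 0 + 0) x = 1 * \<iota> 0 x + \<iota> 0 x"
    using assms unfolding L2_embedding_def by metis
  then show ?thesis by simp
qed

lemma L2_embedding_scaleR: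
  assumes "L2_embedding \<Omega> \<iota>" shows "\<iota> (a *\<^sub>R v) x = a * \<iota> v x"
  using assms L2_embedding_zero[OF assms] unfolding L2_embedding_def
  by (metis add.right_neutral)

lemma L2_embedding_diff:
  assumes "L2_embedding \<Omega> \<iota>" shows "\<iota> (u - v) x = \<iota> u x - \<iota> v x"
proof -
  have "\<iota> ((-1) *\<^sub>R v + u) x = -1 * \<iota> v x + \<iota> u x"
    using assms unfolding L2_embedding_def by metis
  then show ?thesis by simp
qed

lemma L2_embedding_integrable_powr:
  assumes \<Omega>: "\<Omega> \<in> lmeasurable" and L2: "L2_embedding \<Omega> \<iota>" and p: "0 \<le> p" "p \<le> 2"
  shows "integrable (lebesgue_on \<Omega>) (\<lambda>x. \<bar>\<iota> u x\<bar> powr p)"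
proof (rule Bochner_Integration.integrable_bound)
  have L2u: "Lp_mem 2 \<Omega> (\<iota> u)" using L2 unfolding L2_embedding_def by blast
  then show "integrable (lebesgue_on \<Omega>) (\<lambda>x. 1 + \<bar>\<iota> u x\<bar> powr 2)"
    using finite_measure.integrable_const[OF finite_measure_lebesgue_on[OF \<Omega>]]
    unfolding Lp_mem_def by (intro Bochner_Integration.integrable_add) auto
  have [measurable]: "\<iota> u \<in> borel_measurable (lebesgue_on \<Omega>)"
    using L2u unfolding Lp_mem_def by blast
  show "(\<lambda>x. \<bar>\<iota> u x\<bar> powr p) \<in> borel_measurable (lebesgue_on \<Omega>)"
    by measurable
  have "\<bar>y\<bar> powr p \<le> 1 + \<bar>y\<bar> powr 2" for y :: real
  proof (cases "\<bar>y\<bar> \<le> 1")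
    case True
    then show ?thesis using powr_le1[OF p(1), of "\<bar>y\<bar>"] by (smt (verit) powr_ge_zero)
  next
    case False
    then show ?thesis using powr_mono[OF p(2), of "\<bar>y\<bar>"] by simp
  qed
  then show "AE x in lebesgue_on \<Omega>. norm (\<bar>\<iota> u x\<bar> powr p) \<le> norm (1 + \<bar>\<iota> u x\<bar> powr 2)"
    by (intro AE_I2) (simp add: add_nonneg_nonneg)
qed

lemma local_solution_difference_quotient_bound:
  fixes F P :: "'v::real_inner \<Rightarrow> real"
  assumes loc: "local_solution (\<lambda>u. F u + \<alpha> / 2 * (norm u)\<^sup>2 + P u) ub"
    and P: "\<And>s. 0 < s \<Longrightarrow> s \<le> 1 \<Longrightarrow> P (ub - s *\<^sub>R w) \<le> P ub"
  shows "\<forall>\<^sub>F s in at_right 0. \<alpha> * inner ub w - \<alpha> / 2 * s * (norm w)\<^sup>2 \<le> (F (ub - s *\<^sub>R w) - F ub) / s"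
proof -
  obtain \<rho> where \<rho>: "\<rho> > 0" and min:
    "\<And>u. norm (u - ub) \<le> \<rho> \<Longrightarrow> F ub + \<alpha> / 2 * (norm ub)\<^sup>2 + P ub \<le> F u + \<alpha> / 2 * (norm u)\<^sup>2 + P u"
    using loc unfolding local_solution_def by blast
  define \<delta> where "\<delta> = min 1 (\<rho> / (norm w + 1))"
  have \<delta>: "\<delta> > 0" unfolding \<delta>_def using \<rho> by (simp add: add_nonneg_pos)
  have "\<alpha> * inner ub w - \<alpha> / 2 * s * (norm w)\<^sup>2 \<le> (F (ub - s *\<^sub>R w) - F ub) / s"
    if s: "0 < s" "s < \<delta>" for s
  proof -
    have s1: "s \<le> 1" and "s < \<rho> / (norm w + 1)"
      using s unfolding \<delta>_def by auto
    then have "s * (norm w + 1) \<le> \<rho>"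
      by (simp add: pos_less_divide_eq add_nonneg_pos)
    then have "norm ((ub - s *\<^sub>R w) - ub) \<le> \<rho>"
      using s(1) by (simp add: algebra_simps)
    then have "F ub + \<alpha> / 2 * (norm ub)\<^sup>2 + P ub
        \<le> F (ub - s *\<^sub>R w) + \<alpha> / 2 * (norm (ub - s *\<^sub>R w))\<^sup>2 + P (ub - s *\<^sub>R w)"
      by (rule min)
    moreover have "(norm (ub - s *\<^sub>R w))\<^sup>2 = (norm ub)\<^sup>2 - 2 * s * inner ub w + s\<^sup>2 * (norm w)\<^sup>2"
      unfolding power2_norm_eq_inner
      by (simp add: inner_diff_left inner_diff_right inner_commute algebra_simps power2_eq_square)
    ultimately have "F ub \<le> F (ub - s *\<^sub>R w) - \<alpha> * s * inner ub w + \<alpha> / 2 * s\<^sup>2 * (norm w)\<^sup>2"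
      using P[OF s(1) s1] by (simp add: algebra_simps)
    then have "s * (\<alpha> * inner ub w - \<alpha> / 2 * s * (norm w)\<^sup>2) \<le> F (ub - s *\<^sub>R w) - F ub"
      by (simp add: algebra_simps power2_eq_square)
    then show ?thesis using s(1) by (simp add: field_simps)
  qed
  then show ?thesis
    using eventually_at_right_real[OF \<delta>] by (auto elim: eventually_mono)
qed

lemma local_solution_descent_inequality:
  fixes F P :: "'v::real_inner \<Rightarrow> real"
  assumes loc: "local_solution (\<lambda>u. F u + \<alpha> / 2 * (norm u)\<^sup>2 + P u) ub"
    and F': "(F has_derivative D) (at ub)"
    and P: "\<And>s. 0 < s \<Longrightarrow> s \<le> 1 \<Longrightarrow> P (ub - s *\<^sub>R w) \<le> P ub"
  shows "\<alpha> * inner ub w \<le> - D w"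
proof -
  have path: "((\<lambda>s::real. ub + s *\<^sub>R (- w)) has_derivative (\<lambda>s. s *\<^sub>R (- w))) (at 0)"
    by (auto intro!: derivative_eq_intros)
  have "((\<lambda>s. F (ub + s *\<^sub>R (- w))) has_derivative (\<lambda>s. D (s *\<^sub>R (- w)))) (at 0)"
    using has_derivative_compose[OF path, of F D] F' by simp
  moreover have "(\<lambda>s. D (s *\<^sub>R (- w))) = (*) (- D w)"
    using has_derivative_linear[OF F'] by (auto simp: linear_scale linear_neg)
  ultimately have "((\<lambda>s. F (ub + s *\<^sub>R (- w))) has_field_derivative - D w) (at 0)"
    by (simp only: has_field_derivative_def)
  then have "((\<lambda>s. (F (ub - s *\<^sub>R w) - F ub) / s) \<longlongrightarrow> - D w) (at 0)"
    by (simp add: has_field_derivative_iff)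
  then have "((\<lambda>s. (F (ub - s *\<^sub>R w) - F ub) / s) \<longlongrightarrow> - D w) (at_right 0)"
    by (rule tendsto_mono[OF at_le, rotated]) simp
  moreover have "((\<lambda>s. \<alpha> * inner ub w - \<alpha> / 2 * s * (norm w)\<^sup>2) \<longlongrightarrow> \<alpha> * inner ub w) (at_right 0)"
    by (auto intro!: tendsto_eq_intros)
  ultimately show ?thesis
    using local_solution_difference_quotient_bound[OF loc P]
    by (intro tendsto_le[of "at_right (0::real)"]) auto
qed

lemma objective_descent_inequality:
  assumes \<Omega>: "\<Omega> \<in> lmeasurable" and L2: "L2_embedding \<Omega> \<iota>"
    and \<beta>: "\<beta> \<ge> 0" and p: "0 \<le> p" "p \<le> 2"
    and loc: "local_solution (objective F \<alpha> \<beta> p \<Omega> \<iota>) ub"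
    and F': "(F has_derivative D) (at ub)"
    and shrink: "AE x in lebesgue_on \<Omega>. \<forall>s\<in>{0..1}. \<bar>\<iota> ub x - s * \<iota> w x\<bar> \<le> \<bar>\<iota> ub x\<bar>"
  shows "\<alpha> * inner ub w \<le> - D w"
proof (rule local_solution_descent_inequality[OF _ F'])
  define P where "P u = \<beta> * (\<integral>x. \<bar>\<iota> u x\<bar> powr p \<partial>lebesgue_on \<Omega>)" for u
  show "local_solution (\<lambda>u. F u + \<alpha> / 2 * (norm u)\<^sup>2 + P u) ub"
    using loc unfolding P_def objective_def .
  fix s :: real
  assume s: "0 < s" "s \<le> 1"
  have "(\<integral>x. \<bar>\<iota> (ub - s *\<^sub>R w) x\<bar> powr p \<partial>lebesgue_on \<Omega>) \<le> (\<integral>x. \<bar>\<iota> ub x\<bar> powr p \<partial>lebesgue_on \<Omega>)"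
    using shrink
  proof (intro integral_mono_AE L2_embedding_integrable_powr[OF \<Omega> L2 p], eventually_elim)
    case (elim x)
    then show ?case
      using s p by (simp add: L2_embedding_diff[OF L2] L2_embedding_scaleR[OF L2] powr_mono2)
  qed
  then show "P (ub - s *\<^sub>R w) \<le> P ub"
    unfolding P_def using \<beta> by (rule mult_left_mono)
qed

lemma assumption_T_excess:
  assumes T: "assumption_T \<Omega> \<iota>" and L2: "L2_embedding \<Omega> \<iota>" and k: "k > 0"
  shows "\<exists>w. (AE x in lebesgue_on \<Omega>. \<iota> w x = excess k (\<iota> u x)) \<and> (norm w)\<^sup>2 \<le> inner u w"
proof -
  txt \<open>Apply (T)(i) to \<open>u/k\<close> and rescale: \<open>w = u - k v\<close>.\<close>
  obtain v where v: "AE x in lebesgue_on \<Omega>. \<iota> v x = clamp1 (\<iota> ((1/k) *\<^sub>R u) x)"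
    and v_inner: "inner ((1/k) *\<^sub>R u) v \<ge> (norm v)\<^sup>2"
    using T unfolding assumption_T_def by blast
  define w where "w = u - k *\<^sub>R v"
  have "AE x in lebesgue_on \<Omega>. \<iota> w x = excess k (\<iota> u x)"
    using v by eventually_elim
      (simp add: w_def excess_def L2_embedding_diff[OF L2] L2_embedding_scaleR[OF L2] divide_inverse mult.commute)
  moreover have "inner u w - (norm w)\<^sup>2 = k\<^sup>2 * (inner ((1/k) *\<^sub>R u) v - (norm v)\<^sup>2)"
    unfolding w_def power2_norm_eq_inner using k
    by (simp add: inner_diff_left inner_diff_right inner_commute power2_eq_square field_simps)
  then have "(norm w)\<^sup>2 \<le> inner u w"
    using v_inner by (smt (verit) mult_nonneg_nonneg zero_le_power2)
  ultimately show ?thesis by blast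
qed

lemma local_solution_excess_energy:
  assumes \<Omega>: "\<Omega> \<in> lmeasurable" and L2: "L2_embedding \<Omega> \<iota>" and T: "assumption_T \<Omega> \<iota>"
    and \<alpha>: "\<alpha> \<ge> 0" and \<beta>: "\<beta> \<ge> 0" and p: "0 \<le> p" "p \<le> 2"
    and loc: "local_solution (objective F \<alpha> \<beta> p \<Omega> \<iota>) ub"
    and F': "(F has_derivative D) (at ub)" and k: "k > 0"
  shows "\<exists>w. (AE x in lebesgue_on \<Omega>. \<iota> w x = excess k (\<iota> ub x)) \<and> \<alpha> * (norm w)\<^sup>2 \<le> - D w"
proof -
  obtain w where w: "AE x in lebesgue_on \<Omega>. \<iota> w x = excess k (\<iota> ub x)"
    and w_inner: "(norm w)\<^sup>2 \<le> inner ub w"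
    using assumption_T_excess[OF T L2 k] by blast
  have "AE x in lebesgue_on \<Omega>. \<forall>s\<in>{0..1}. \<bar>\<iota> ub x - s * \<iota> w x\<bar> \<le> \<bar>\<iota> ub x\<bar>"
    using w by eventually_elim (auto intro: abs_diff_scaled_excess_le[OF k])
  then have "\<alpha> * inner ub w \<le> - D w"
    by (rule objective_descent_inequality[OF \<Omega> L2 \<beta> p loc F'])
  moreover have "\<alpha> * (norm w)\<^sup>2 \<le> \<alpha> * inner ub w"
    using w_inner \<alpha> by (simp add: mult_left_mono)
  ultimately show ?thesis using w by force
qed

lemma quadratic_absorption:
  fixes \<alpha> B C N W :: real
  assumes \<alpha>: "\<alpha> > 0" and W: "0 \<le> W" "W \<le> C * N" and B: "B \<ge> 0" and energy: "\<alpha> * N\<^sup>2 \<le> B * W"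
  shows "\<alpha> * W \<le> C\<^sup>2 * B"
proof (cases "W = 0")
  case True
  then show ?thesis using B by simp
next
  case False
  have "\<alpha> * W\<^sup>2 \<le> \<alpha> * (C * N)\<^sup>2"
    using W \<alpha> by (intro mult_left_mono power_mono) auto
  also have "\<dots> \<le> C\<^sup>2 * (B * W)"
    using mult_left_mono[OF energy, of "C\<^sup>2"] by (simp add: power_mult_distrib algebra_simps)
  finally have "W * (\<alpha> * W) \<le> W * (C\<^sup>2 * B)"
    by (simp add: power2_eq_square algebra_simps)
  then show ?thesis using False W by (simp add: mult_le_cancel_left_pos)
qed

lemma Lp_cong_AE:
  assumes f: "Lp_mem q \<Omega> f" and h: "h \<in> borel_measurable (lebesgue_on \<Omega>)"
    and eq: "AE x in lebesgue_on \<Omega>. f x = h x"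
  shows "Lp_mem q \<Omega> h" and "Lp_norm q \<Omega> h = Lp_norm q \<Omega> f"
proof -
  have [measurable]: "f \<in> borel_measurable (lebesgue_on \<Omega>)" "h \<in> borel_measurable (lebesgue_on \<Omega>)"
    using f h unfolding Lp_mem_def by auto
  have powr_eq: "AE x in lebesgue_on \<Omega>. \<bar>f x\<bar> powr q = \<bar>h x\<bar> powr q"
    using eq by eventually_elim simp
  show "Lp_mem q \<Omega> h"
    using f integrable_cong_AE_imp[OF _ _ powr_eq] unfolding Lp_mem_def by simp
  show "Lp_norm q \<Omega> h = Lp_norm q \<Omega> f"
    unfolding Lp_norm_def by (subst integral_cong_AE[OF _ _ powr_eq]) simp_all
qed

section \<open>Boundedness of local solutions\<close>

lemma Holder_Stampacchia_exponents:
  fixes t q :: real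
  assumes t: "t > 1" and q: "q > 0" and tq: "1/t + 2/q < 1"
  shows "q > 1" and "1 - 1/t - 1/q > 0" and "(1 - 1/t - 1/q) * q > 1"
proof -
  have "1/q < 2/q" using q by (simp add: divide_strict_right_mono)
  then show "1 - 1/t - 1/q > 0" using tq by linarith
  have "(1 - 1/t - 1/q) * q - 1 = q * (1 - (1/t + 2/q))"
    using q by (simp add: field_simps)
  moreover have "q * (1 - (1/t + 2/q)) > 0"
    using q tq by (intro mult_pos_pos) auto
  ultimately show "(1 - 1/t - 1/q) * q > 1" by linarith
  show "q > 1"
    using t q tq by (smt (verit) divide_pos_pos le_divide_eq_1_pos)
qed

lemma excess_Lq_estimate:
  fixes \<iota> :: "'v::real_inner \<Rightarrow> 'd::euclidean_space \<Rightarrow> real"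
  assumes \<Omega>: "\<Omega> \<in> lmeasurable" and u: "\<iota> u \<in> borel_measurable (lebesgue_on \<Omega>)"
    and w_Lq: "Lp_mem q \<Omega> (\<iota> w)" and w_bound: "Lp_norm q \<Omega> (\<iota> w) \<le> C * norm w"
    and g: "Lp_mem t \<Omega> g"
    and exponents: "t > 1" "q > 1" "r > 0" "1/t + 1/q + r = 1" and \<alpha>: "\<alpha> > 0" and k: "k > 0"
    and w: "AE x in lebesgue_on \<Omega>. \<iota> w x = excess k (\<iota> u x)"
    and energy: "\<alpha> * (norm w)\<^sup>2 \<le> - (\<integral>x. g x * \<iota> w x \<partial>lebesgue_on \<Omega>)"
  shows "Lp_mem q \<Omega> (\<lambda>x. excess k (\<iota> u x))"
    and "Lp_norm q \<Omega> (\<lambda>x. excess k (\<iota> u x))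
      \<le> C\<^sup>2 * Lp_norm t \<Omega> g / \<alpha> * measure (lebesgue_on \<Omega>) {x \<in> \<Omega>. k < \<bar>\<iota> u x\<bar>} powr r"
proof -
  define M where "M = lebesgue_on \<Omega>"
  define f where "f x = excess k (\<iota> u x)" for x
  define A where "A = {x \<in> \<Omega>. k < \<bar>\<iota> u x\<bar>}"
  define m where "m = measure M A"
  have [measurable]: "\<iota> u \<in> borel_measurable M" "\<iota> w \<in> borel_measurable M"
    using u w_Lq unfolding Lp_mem_def M_def by auto
  have [measurable]: "g \<in> borel_measurable M" and g_int: "integrable M (\<lambda>x. \<bar>g x\<bar> powr t)"
    using g unfolding Lp_mem_def M_def by auto
  have f_meas[measurable]: "f \<in> borel_measurable M" unfolding f_def by measurable
  have A_sets[measurable]: "A \<in> sets M"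
  proof -
    have "A = {x \<in> space M. k < \<bar>\<iota> u x\<bar>}" unfolding A_def M_def by simp
    also have "\<dots> \<in> sets M" by measurable
    finally show ?thesis .
  qed
  have f_Lq: "Lp_mem q \<Omega> f" and W_eq: "Lp_norm q \<Omega> f = Lp_norm q \<Omega> (\<iota> w)"
    using Lp_cong_AE[OF w_Lq _ w] f_meas unfolding f_def M_def by auto
  show "Lp_mem q \<Omega> (\<lambda>x. excess k (\<iota> u x))" using f_Lq unfolding f_def .
  have "AE x in M. g x * \<iota> w x = g x * f x"
    using w unfolding f_def M_def by eventually_elim simp
  then have "(\<integral>x. g x * \<iota> w x \<partial>M) = (\<integral>x. g x * f x \<partial>M)"
    by (intro integral_cong_AE) measurable
  then have "\<alpha> * (norm w)\<^sup>2 \<le> - (\<integral>x. g x * f x \<partial>M)"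
    using energy unfolding M_def by simp
  also have "\<dots> \<le> (\<integral>x. \<bar>g x\<bar> * \<bar>f x\<bar> \<partial>M)"
    using integral_abs_bound[of M "\<lambda>x. g x * f x"] by (simp add: abs_mult)
  also have "\<dots> \<le> Lp_norm t \<Omega> g * Lp_norm q \<Omega> f * m powr r"
    unfolding Lp_norm_def m_def M_def[symmetric]
  proof (rule Holder_inequality_on_support[OF _ f_meas A_sets _ g_int _ _ exponents])
    show "emeasure M A < \<infinity>"
      using finite_measure.emeasure_finite[OF finite_measure_lebesgue_on[OF \<Omega>]]
      unfolding M_def by (simp add: less_top)
    show "integrable M (\<lambda>x. \<bar>f x\<bar> powr q)" using f_Lq unfolding Lp_mem_def M_def by blast
    show "f x = 0" if "x \<in> space M" "x \<notin> A" for x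
      using that excess_eq_0[OF k] unfolding f_def A_def M_def by auto
  qed simp
  finally have "\<alpha> * (norm w)\<^sup>2 \<le> (Lp_norm t \<Omega> g * m powr r) * Lp_norm q \<Omega> f"
    by (simp only: ac_simps)
  then have "\<alpha> * Lp_norm q \<Omega> f \<le> C\<^sup>2 * (Lp_norm t \<Omega> g * m powr r)"
    using W_eq w_bound \<alpha> by (intro quadratic_absorption) (auto simp: Lp_norm_def)
  then show "Lp_norm q \<Omega> (\<lambda>x. excess k (\<iota> u x))
      \<le> C\<^sup>2 * Lp_norm t \<Omega> g / \<alpha> * measure (lebesgue_on \<Omega>) {x \<in> \<Omega>. k < \<bar>\<iota> u x\<bar>} powr r"
    using \<alpha> unfolding m_def f_def A_def M_def by (simp add: field_simps)
qed

theorem theorem5p9: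
  fixes \<Omega> :: "'d::euclidean_space set"
    and \<iota> :: "'v::{real_inner,complete_space} \<Rightarrow> 'd \<Rightarrow> real"
    and F :: "'v \<Rightarrow> real" and DF :: "'v \<Rightarrow> 'v \<Rightarrow>\<^sub>L real"
    and \<alpha> \<beta> p q t :: real and ub :: 'v and g :: "'d \<Rightarrow> real"
  assumes dom: "bounded_lipschitz_domain \<Omega>"
    and emb: "compact_dense_L2_embedding \<Omega> \<iota>"
    and F_wlsc: "weakly_lsc F"
    and F_below: "bounded_below_affine F"
    and F_C1: "continuously_frechet F DF"
    and \<alpha>: "\<alpha> > 0" and \<beta>: "\<beta> > 0" and p: "0 < p" "p < 1"
    and T: "assumption_T \<Omega> \<iota>"
    and q: "q > 2" and Lq: "continuous_Lq_embedding q \<Omega> \<iota>"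
    and t: "t > 1" "1 / t + 2 / q < 1"
    and loc: "local_solution (objective F \<alpha> \<beta> p \<Omega> \<iota>) ub"
    and g: "Lp_mem t \<Omega> g"
    and Fg: "\<forall>v. blinfun_apply (DF ub) v = integral\<^sup>L (lebesgue_on \<Omega>) (\<lambda>x. g x * \<iota> v x)"
  shows "Linf_mem \<Omega> (\<iota> ub)"
proof -
  txt \<open>Weak lower semicontinuity and the affine lower bound of \<open>F\<close>, the compactness of the
    embedding and the Lipschitz boundary only matter for existence of solutions; here the
    domain is used only through its finite measure.\<close>
  have \<Omega>: "\<Omega> \<in> lmeasurable"
    using dom lmeasurable_open unfolding bounded_lipschitz_domain_def lipschitz_domain_def by blast
  have L2: "L2_embedding \<Omega> \<iota>"
    using emb unfolding compact_dense_L2_embedding_def by blast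
  obtain C where Lq_bound: "\<And>v. Lp_norm q \<Omega> (\<iota> v) \<le> C * norm v" and Lq_mem: "\<And>v. Lp_mem q \<Omega> (\<iota> v)"
    using Lq unfolding continuous_Lq_embedding_def by blast
  have ub_meas: "\<iota> ub \<in> borel_measurable (lebesgue_on \<Omega>)"
    using Lq_mem[of ub] unfolding Lp_mem_def by blast
  have F': "(F has_derivative DF ub) (at ub)"
    using F_C1 unfolding continuously_frechet_def by blast
  define r where "r = 1 - 1/t - 1/q"
  have exponents: "q > 1" "r > 0" "1/t + 1/q + r = 1" "r * q > 1"
    using Holder_Stampacchia_exponents[of t q] q t unfolding r_def by auto
  have estimate: "Lp_mem q \<Omega> (\<lambda>x. excess k (\<iota> ub x)) \<and> Lp_norm q \<Omega> (\<lambda>x. excess k (\<iota> ub x))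
      \<le> C\<^sup>2 * Lp_norm t \<Omega> g / \<alpha> * measure (lebesgue_on \<Omega>) {x \<in> \<Omega>. k < \<bar>\<iota> ub x\<bar>} powr r"
    if k: "k > 0" for k
  proof -
    obtain w where w: "AE x in lebesgue_on \<Omega>. \<iota> w x = excess k (\<iota> ub x)"
      and "\<alpha> * (norm w)\<^sup>2 \<le> - DF ub w"
      using local_solution_excess_energy[OF \<Omega> L2 T _ _ _ _ loc F' k] \<alpha> \<beta> p by auto
    then have "\<alpha> * (norm w)\<^sup>2 \<le> - (\<integral>x. g x * \<iota> w x \<partial>lebesgue_on \<Omega>)" using Fg by simp
    then show ?thesis
      using excess_Lq_estimate[OF \<Omega> ub_meas Lq_mem Lq_bound g t(1) exponents(1-3) \<alpha> k w] by blast
  qed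
  have "\<exists>c. AE x in lebesgue_on \<Omega>. \<bar>\<iota> ub x\<bar> \<le> c"
    by (rule AE_abs_bounded_of_excess_estimate[OF finite_measure_lebesgue_on[OF \<Omega>] ub_meas,
          where K = "C\<^sup>2 * Lp_norm t \<Omega> g / \<alpha>"])
      (use estimate \<alpha> exponents in \<open>auto simp: Lp_mem_def Lp_norm_def\<close>)
  then show ?thesis
    using ub_meas unfolding Linf_mem_def by blast
qed

end
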